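(* The dominating cooperative game mapping $\omega$ is weakly chain-rule decomposable and importance inducing.
   Context: $X$ is a fixed finite set of $n=|X|$ variables. An assignment over $U\subseteq X$ is a map $\mathbf u:U\to\{0,1\}$; $\mathbf u;\mathbf v$ is concatenation of assignments with disjoint domains, $\mathbf u_S$ is restriction. For $S\subseteq X$ and $\mathbf u$ over $X$, $\mathbf u^{\oplus S}$ flips the values of the variables in $S$. $\mathbb B(X)$ is the set of Boolean functions $\{0,1\}^X\to\{0,1\}$, combined pointwise by $\lor,\land$ (juxtaposition), $\oplus$, negation $\overline f$; a variable $x$ also denotes $\mathbf u\mapsto\mathbf u(x)$; $f\ge g$ is pointwise. Cofactor: $f_{\mathbf v}(\mathbf u)=f(\mathbf v;\mathbf u_{X\setminus V})$ for $\mathbf v$ over $V$; $f_{x/c}$ for $V=\{x\}$. $\mathrm{dep}(f)=\{x: f_{x/1}\ne f_{x/0}\}$; $f$ is monotone in $x$ if $f_{x/1}\ge f_{x/0}$. $f^{\oplus y}(\mathbf u)=f(\mathbf u^{\oplus\{y\}})$. For a permutation $\sigma$ of $X$: $(\sigma\mathbf u)(x)=\mathbf u(\sigma^{-1}(x))$, $(\sigma f)(\mathbf u)=f(\sigma^{-1}\mathbf u)$. $f[x/s]=s f_{x/1}\lor\overline s f_{x/0}$. Modularity: $f$ is modular in $g$ if $g$ is not constant and there are $\ell\in\mathbb B(X)$, $z\in X$ with $\mathrm{dep}(\ell)\cap\mathrm{dep}(g)=\emptyset$ and $f=\ell[z/g]$; monotonically modular if moreover $\ell$ is monotone in $z$.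 Then $f_{g/1}:=\ell_{z/1}$, $f_{g/0}:=\ell_{z/0}$ (well defined), and for a variable $w$, $f[g/w]:=w f_{g/1}\lor\overline w f_{g/0}$. Cooperative games: $v:2^X\to\mathbb R$, combined and compared pointwise; $\partial_xv(S)=v(S\cup\{x\})-v(S\setminus\{x\})$. A cooperative game mapping (CGM) is $\tau:\mathbb B(X)\to(2^X\to\mathbb R)$, $f\mapsto\tau_f$. It is importance inducing if for all $x,y\in X$, permutations $\sigma$ and $f,g,h$: (Bound$_{CG}$) $0\le\partial_x\tau_f\le1$; (Dum$_{CG}$) $\partial_x\tau_f=0$ if $x\notin\mathrm{dep}(f)$; (Dic$_{CG}$) $\partial_x\tau_x=\partial_x\tau_{\overline x}=1$; (Type$_{CG}$) $\tau_f(S)=\tau_{\sigma f}(\sigma(S))$ and $\tau_f(S)=\tau_{f^{\oplus y}}(S)$ for all $S$; (ModEC$_{CG}$) $\partial_x\tau_f\ge\partial_x\tau_h$ whenever $f,h$ are monotonically modular in $g$, $f_{g/1}\ge h_{g/1}$, $h_{g/0}\ge f_{g/0}$, $x\in\mathrm{dep}(g)$. $\tau$ is weakly chain-rule decomposable if for all $f$ monotonically modular in $g$ and $x\in\mathrm{dep}(g)$: $\partial_x\tau_f=(\partial_x\tau_g)(\partial_{x_g}\tau_{f[g/x_g]})$ for a variable $x_g\notin\mathrm{dep}(f)$. The dominating CGM is $\omega_f(S)=1$ if there is $\mathbf u\in\{0,1\}^S$ such that $f(\mathbf u;\mathbf w)=1$ for all $\mathbf w\in\{0,1\}^{X\setminus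 S}$, and $\omega_f(S)=0$ otherwise. *)

theory Defs
  imports Complex_Main
begin

text \<open>Variables: elements of a finite type 'x (the set X = UNIV).
  A function on a sub-domain X - V (e.g. a cofactor) is represented as a total
  Boolean function that ignores the variables in V.\<close>

type_synonym 'x bfun = "('x \<Rightarrow> bool) \<Rightarrow> bool"
type_synonym 'x game = "'x set \<Rightarrow> real"
type_synonym 'x cgm = "'x bfun \<Rightarrow> 'x game"

definition bvar :: "'x \<Rightarrow> 'x bfun" where
  "bvar x = (\<lambda>u. u x)"

definition cof :: "'x bfun \<Rightarrow> 'x \<Rightarrow> bool \<Rightarrow> 'x bfun" where
  "cof f x c = (\<lambda>u. f (u(x := c)))"

definition dep :: "'x bfun \<Rightarrow> 'x set" where
  "dep f = {x. cof f x True \<noteq> cof f x False}"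

definition monotone_in :: "'x bfun \<Rightarrow> 'x \<Rightarrow> bool" where
  "monotone_in f x \<longleftrightarrow> cof f x True \<ge> cof f x False"

definition flipvar :: "'x bfun \<Rightarrow> 'x \<Rightarrow> 'x bfun" where
  "flipvar f y = (\<lambda>u. f (u(y := \<not> u y)))"

text \<open>(\<sigma> u)(x) = u(\<sigma>^-1 x), (\<sigma> f)(u) = f(\<sigma>^-1 u); note (\<sigma>^-1 u) = u \<circ> \<sigma>.\<close>
definition perm_fun :: "('x \<Rightarrow> 'x) \<Rightarrow> 'x bfun \<Rightarrow> 'x bfun" where
  "perm_fun \<sigma> f = (\<lambda>u. f (u \<circ> \<sigma>))"

definition subst :: "'x bfun \<Rightarrow> 'x \<Rightarrow> 'x bfun \<Rightarrow> 'x bfun" where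
  "subst f x s = (\<lambda>u. (s u \<and> cof f x True u) \<or> (\<not> s u \<and> cof f x False u))"

definition nonconstant :: "'x bfun \<Rightarrow> bool" where
  "nonconstant g \<longleftrightarrow> (\<exists>u v. g u \<noteq> g v)"

definition modular :: "'x bfun \<Rightarrow> 'x bfun \<Rightarrow> bool" where
  "modular f g \<longleftrightarrow> nonconstant g \<and>
     (\<exists>l z. dep l \<inter> dep g = {} \<and> f = subst l z g)"

definition mono_modular :: "'x bfun \<Rightarrow> 'x bfun \<Rightarrow> bool" where
  "mono_modular f g \<longleftrightarrow> nonconstant g \<and>
     (\<exists>l z. dep l \<inter> dep g = {} \<and> monotone_in l z \<and> f = subst l z g)"

text \<open>f_{g/c} := l_{z/c} (well defined when f is modular in g).\<close>
definition mod_cof :: "'x bfun \<Rightarrow> 'x bfun \<Rightarrow> bool \<Rightarrow> 'x bfun" where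
  "mod_cof f g c = (SOME h. \<exists>l z. dep l \<inter> dep g = {} \<and> f = subst l z g \<and> h = cof l z c)"

definition mod_subst :: "'x bfun \<Rightarrow> 'x bfun \<Rightarrow> 'x \<Rightarrow> 'x bfun" where
  "mod_subst f g w = (\<lambda>u. (u w \<and> mod_cof f g True u) \<or> (\<not> u w \<and> mod_cof f g False u))"

definition pderiv_game :: "'x \<Rightarrow> 'x game \<Rightarrow> 'x game" where
  "pderiv_game x v = (\<lambda>S. v (S \<union> {x}) - v (S - {x}))"

definition importance_inducing :: "'x cgm \<Rightarrow> bool" where
  "importance_inducing \<tau> \<longleftrightarrow>
     (\<forall>f x S. 0 \<le> pderiv_game x (\<tau> f) S \<and> pderiv_game x (\<tau> f) S \<le> 1)
   \<and> (\<forall>f x. x \<notin> dep f \<longrightarrow> pderiv_game x (\<tau> f) = (\<lambda>S. 0))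
   \<and> (\<forall>x. pderiv_game x (\<tau> (bvar x)) = (\<lambda>S. 1)
          \<and> pderiv_game x (\<tau> (\<lambda>u. \<not> bvar x u)) = (\<lambda>S. 1))
   \<and> (\<forall>\<sigma> f S. bij \<sigma> \<longrightarrow> \<tau> f S = \<tau> (perm_fun \<sigma> f) (\<sigma> ` S))
   \<and> (\<forall>f y S. \<tau> f S = \<tau> (flipvar f y) S)
   \<and> (\<forall>f g h x. mono_modular f g \<and> mono_modular h g
          \<and> mod_cof f g True \<ge> mod_cof h g True
          \<and> mod_cof h g False \<ge> mod_cof f g False
          \<and> x \<in> dep g
          \<longrightarrow> pderiv_game x (\<tau> f) \<ge> pderiv_game x (\<tau> h))"

definition weakly_chain_rule_decomposable :: "'x cgm \<Rightarrow> bool" where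
  "weakly_chain_rule_decomposable \<tau> \<longleftrightarrow>
     (\<forall>f g x xg. mono_modular f g \<and> x \<in> dep g \<and> xg \<notin> dep f \<longrightarrow>
        pderiv_game x (\<tau> f) =
          (\<lambda>S. pderiv_game x (\<tau> g) S * pderiv_game xg (\<tau> (mod_subst f g xg)) S))"

definition dominating :: "'x cgm" where
  "dominating f S = (if \<exists>u. \<forall>w. f (\<lambda>x. if x \<in> S then u x else w x) then 1 else 0)"

end

theory Submission
  imports Defs
begin

text \<open>
  The value of the dominating game at \<open>S\<close> is 1 iff some assignment to \<open>S\<close> forces \<open>f\<close> to 1,
  so its derivative in \<open>x\<close> indicates that \<open>x\<close> is pivotal for forcing \<open>f\<close>. Let \<open>f = l[z/g]\<close>
  with \<open>l\<close> monotone in \<open>z\<close>, and let \<open>A \<ge> B\<close> be the modular cofactors of \<open>f\<close> at \<open>g = 1\<close> and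
  \<open>g = 0\<close>. As \<open>g\<close> shares no variables with \<open>A\<close> and \<open>B\<close>, a coalition forces \<open>f\<close> iff it forces
  \<open>B\<close>, or forces both \<open>g\<close> and \<open>A\<close>. Hence for \<open>x\<close> in \<open>dep g\<close>, which \<open>A\<close> and \<open>B\<close> ignore, \<open>x\<close> is
  pivotal for \<open>f\<close> at \<open>S\<close> iff it is pivotal for \<open>g\<close> and \<open>S\<close> forces \<open>A\<close> but not \<open>B\<close>. For \<open>f[g/x\<^sub>g]\<close>
  the role of \<open>g\<close> is played by the dictator \<open>x\<^sub>g\<close>, which is always pivotal, so the second
  factor of the chain rule is exactly that indicator; the monotone-modular axiom follows at
  once. The remaining axioms hold because forcing is monotone in \<open>S\<close> and in \<open>f\<close>, and invariant
  under renaming and negating variables.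
\<close>

lemma not_in_dep_iff: "x \<notin> dep f \<longleftrightarrow> (\<forall>u c. f (u(x := c)) = f u)"
proof
  assume "x \<notin> dep f"
  then have "f (u(x := b)) = f (u(x := b'))" for u b b'
    by (cases b; cases b') (auto simp: dep_def cof_def dest: fun_cong[of _ _ u])
  then show "\<forall>u c. f (u(x := c)) = f u"
    by (metis fun_upd_triv)
qed (simp add: dep_def cof_def)

lemma override_on_disjoint_dep:
  assumes "finite F" and "F \<inter> dep f = {}"
  shows "f (override_on u v F) = f u"
  using assms
proof (induction F rule: finite_induct)
  case (insert y F)
  then have "y \<notin> dep f"
    by blast
  then have "f ((override_on u v F)(y := v y)) = f (override_on u v F)"
    by (metis not_in_dep_iff)
  also have "\<dots> = f u"
    using insert by blast
  finally show ?case
    by (simp only: override_on_insert)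
qed simp

lemma dep_cong:
  fixes f :: "('x::finite) bfun"
  assumes "\<And>y. y \<in> dep f \<Longrightarrow> u y = v y"
  shows "f u = f v"
proof -
  have "f (override_on u v {y. u y \<noteq> v y}) = f u"
    by (rule override_on_disjoint_dep) (use assms in auto)
  moreover have "override_on u v {y. u y \<noteq> v y} = v"
    by (rule ext) (simp add: override_on_def)
  ultimately show ?thesis
    by simp
qed

lemma dep_override_on_subset: "dep (\<lambda>u. f (override_on u v G)) \<subseteq> dep f - G"
proof
  fix x
  assume x: "x \<in> dep (\<lambda>u. f (override_on u v G))"
  have unchanged: "f (override_on (u(x := c)) v G) = f (override_on u v G)"
    if "x \<notin> dep f \<or> x \<in> G" for u c
  proof (cases "x \<in> G")
    case False
    have "override_on (u(x := c)) v G = (override_on u v G)(x := c)"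
      by (rule ext) (use False in \<open>simp add: override_on_def\<close>)
    with False that show ?thesis
      by (simp add: not_in_dep_iff)
  next
    case True
    have "override_on (u(x := c)) v G = override_on u v G"
      by (rule ext) (use True in \<open>simp add: override_on_def\<close>)
    then show ?thesis
      by simp
  qed
  show "x \<in> dep f - G"
  proof (rule ccontr)
    assume "x \<notin> dep f - G"
    then have "\<forall>u c. f (override_on (u(x := c)) v G) = f (override_on u v G)"
      using unchanged by blast
    then have "x \<notin> dep (\<lambda>u. f (override_on u v G))"
      unfolding not_in_dep_iff by blast
    with x show False
      by contradiction
  qed
qed

lemma dep_bvar: "dep (bvar x) = {x}"
  by (auto simp: dep_def cof_def bvar_def fun_eq_iff)

definition forces :: "'x bfun \<Rightarrow> 'x set \<Rightarrow> bool" where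
  "forces f S \<longleftrightarrow> (\<exists>u. \<forall>w. f (override_on w u S))"

lemma dominating_eq_forces: "dominating f S = of_bool (forces f S)"
  by (simp add: dominating_def forces_def override_on_def)

lemma forces_mono:
  assumes "S \<subseteq> T" and "forces f S"
  shows "forces f T"
proof -
  obtain u where u: "\<And>w. f (override_on w u S)"
    using assms(2) by (auto simp: forces_def)
  have "override_on (override_on w u T) u S = override_on w u T" for w
    by (rule ext) (use assms(1) in \<open>auto simp: override_on_def\<close>)
  then show ?thesis
    unfolding forces_def using u by metis
qed

lemma forces_mono_fun:
  assumes "f \<le> h" and "forces f S"
  shows "forces h S"
  using assms by (auto simp: forces_def le_fun_def)

lemma forces_insert_iff:
  assumes "x \<notin> dep f"
  shows "forces f (insert x S) \<longleftrightarrow> forces f S"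
proof
  assume "forces f (insert x S)"
  then obtain u where u: "\<And>w. f (override_on w u (insert x S))"
    by (auto simp: forces_def)
  have "f (override_on w u S) = f (override_on w u (insert x S))" for w
    using assms by (simp add: override_on_insert not_in_dep_iff)
  with u show "forces f S"
    unfolding forces_def by metis
qed (auto intro: forces_mono)

lemma forces_Diff_iff:
  assumes "x \<notin> dep f"
  shows "forces f (S - {x}) \<longleftrightarrow> forces f S"
  using forces_insert_iff[OF assms, of "S - {x}"] forces_insert_iff[OF assms, of S] by simp

lemma forces_literal: "forces (\<lambda>u. u x = b) S \<longleftrightarrow> x \<in> S"
proof
  assume "forces (\<lambda>u. u x = b) S"
  then obtain u where "\<And>w. override_on w u S x = b"
    by (auto simp: forces_def)
  from this[of "\<lambda>_. \<not> b"] show "x \<in> S"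
    by (cases "x \<in> S") auto
qed (auto simp: forces_def intro: exI[of _ "\<lambda>_. b"])

lemma forces_conj_iff:
  fixes g h :: "('x::finite) bfun"
  assumes disj: "dep g \<inter> dep h = {}"
  shows "forces (\<lambda>u. g u \<and> h u) S \<longleftrightarrow> forces g S \<and> forces h S"
proof
  assume "forces g S \<and> forces h S"
  then obtain u\<^sub>g u\<^sub>h where g: "\<And>w. g (override_on w u\<^sub>g S)" and h: "\<And>w. h (override_on w u\<^sub>h S)"
    by (auto simp: forces_def)
  define u where "u = override_on u\<^sub>h u\<^sub>g (dep g)"
  have "g (override_on w u S) = g (override_on w u\<^sub>g S)" for w
    by (rule dep_cong[of g]) (simp add: u_def override_on_def)
  moreover have "h (override_on w u S) = h (override_on w u\<^sub>h S)" for w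
    by (rule dep_cong[of h]) (use disj in \<open>auto simp: u_def override_on_def\<close>)
  ultimately show "forces (\<lambda>u. g u \<and> h u) S"
    unfolding forces_def using g h by metis
qed (auto simp: forces_def)

lemma forces_disj_iff:
  fixes g h :: "('x::finite) bfun"
  assumes disj: "dep g \<inter> dep h = {}"
  shows "forces (\<lambda>u. g u \<or> h u) S \<longleftrightarrow> forces g S \<or> forces h S"
proof
  assume "forces (\<lambda>u. g u \<or> h u) S"
  then obtain u where u: "\<And>w. g (override_on w u S) \<or> h (override_on w u S)"
    by (auto simp: forces_def)
  show "forces g S \<or> forces h S"
  proof (rule disjCI)
    assume "\<not> forces h S"
    then obtain w\<^sub>h where h: "\<not> h (override_on w\<^sub>h u S)"
      unfolding forces_def by blast
    show "forces g S"
      unfolding forces_def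
    proof (intro exI[of _ u] allI, rule ccontr)
      fix w\<^sub>g
      assume g: "\<not> g (override_on w\<^sub>g u S)"
      \<comment> \<open>\<open>g\<close> and \<open>h\<close> read disjoint variables, so one completion falsifies both\<close>
      define w where "w = override_on w\<^sub>h w\<^sub>g (dep g)"
      have "g (override_on w u S) = g (override_on w\<^sub>g u S)"
        by (rule dep_cong[of g]) (simp add: w_def override_on_def)
      moreover have "h (override_on w u S) = h (override_on w\<^sub>h u S)"
        by (rule dep_cong[of h]) (use disj in \<open>auto simp: w_def override_on_def\<close>)
      ultimately show False
        using u[of w] g h by simp
    qed
  qed
qed (auto simp: forces_def)

lemma forces_ite:
  fixes g A B :: "('x::finite) bfun"
  assumes "dep g \<inter> dep A = {}" and "dep g \<inter> dep B = {}" and "B \<le> A"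
  shows "forces (\<lambda>u. g u \<and> A u \<or> \<not> g u \<and> B u) S \<longleftrightarrow> forces g S \<and> forces A S \<or> forces B S"
proof -
  have "(\<lambda>u. g u \<and> A u \<or> \<not> g u \<and> B u) = (\<lambda>u. (g u \<and> A u) \<or> B u)"
    using \<open>B \<le> A\<close> by (auto simp: le_fun_def)
  moreover have "forces (\<lambda>u. (g u \<and> A u) \<or> B u) S \<longleftrightarrow> forces g S \<and> forces A S \<or> forces B S"
  proof
    assume *: "forces (\<lambda>u. (g u \<and> A u) \<or> B u) S"
    then have "forces A S"
      by (rule forces_mono_fun[rotated]) (use \<open>B \<le> A\<close> in \<open>auto simp: le_fun_def\<close>)
    moreover from * have "forces (\<lambda>u. g u \<or> B u) S"
      by (rule forces_mono_fun[rotated]) (auto simp: le_fun_def)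
    ultimately show "forces g S \<and> forces A S \<or> forces B S"
      using assms(2) by (auto simp: forces_disj_iff)
  next
    assume "forces g S \<and> forces A S \<or> forces B S"
    then have "forces (\<lambda>u. g u \<and> A u) S \<or> forces B S"
      using assms(1) by (auto simp: forces_conj_iff)
    then show "forces (\<lambda>u. (g u \<and> A u) \<or> B u) S"
      by (auto elim: forces_mono_fun[rotated] simp: le_fun_def)
  qed
  ultimately show ?thesis
    by simp
qed

lemma forces_comp_surj:
  assumes "surj \<phi>" and "\<And>u w. \<phi> (override_on w u T) = override_on (\<phi> w) (\<phi> u) S"
  shows "forces (f \<circ> \<phi>) T \<longleftrightarrow> forces f S"
proof
  assume "forces (f \<circ> \<phi>) T"
  then obtain u where "\<And>w. f (override_on (\<phi> w) (\<phi> u) S)"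
    using assms(2) by (auto simp: forces_def)
  then show "forces f S"
    using assms(1) unfolding forces_def by (metis surjD)
next
  assume "forces f S"
  then obtain u' where u': "\<And>w. f (override_on w u' S)"
    by (auto simp: forces_def)
  obtain u where "u' = \<phi> u"
    using assms(1) by (metis surjD)
  with u' show "forces (f \<circ> \<phi>) T"
    unfolding forces_def using assms(2) by auto
qed

lemma forces_perm_fun:
  assumes "bij \<sigma>"
  shows "forces (perm_fun \<sigma> f) (\<sigma> ` S) \<longleftrightarrow> forces f S"
proof -
  have "perm_fun \<sigma> f = f \<circ> (\<lambda>u. u \<circ> \<sigma>)"
    by (simp add: perm_fun_def comp_def)
  moreover have "surj (\<lambda>u :: _ \<Rightarrow> bool. u \<circ> \<sigma>)"
  proof (rule surjI)
    show "(u \<circ> inv \<sigma>) \<circ> \<sigma> = u" for u :: "_ \<Rightarrow> bool"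
      using assms by (simp add: comp_assoc bij_is_inj)
  qed
  moreover have "override_on w u (\<sigma> ` S) \<circ> \<sigma> = override_on (w \<circ> \<sigma>) (u \<circ> \<sigma>) S" for u w :: "_ \<Rightarrow> bool"
    using bij_is_inj[OF assms] by (auto simp: override_on_def inj_image_mem_iff)
  ultimately show ?thesis
    by (simp add: forces_comp_surj)
qed

lemma forces_flipvar: "forces (flipvar f y) S \<longleftrightarrow> forces f S"
proof -
  define \<phi> :: "(_ \<Rightarrow> bool) \<Rightarrow> _" where "\<phi> u = u(y := \<not> u y)" for u
  have "flipvar f y = f \<circ> \<phi>"
    by (simp add: flipvar_def \<phi>_def comp_def)
  moreover have "surj \<phi>"
    by (rule surjI[of _ \<phi>]) (simp add: \<phi>_def)
  moreover have "\<phi> (override_on w u S) = override_on (\<phi> w) (\<phi> u) S" for u w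
    by (rule ext) (simp add: \<phi>_def override_on_def)
  ultimately show ?thesis
    by (simp add: forces_comp_surj)
qed

lemma pderiv_dominating:
  "pderiv_game x (dominating f) S = of_bool (forces f (insert x S) \<and> \<not> forces f (S - {x}))"
  using forces_mono[of "S - {x}" "insert x S" f]
  by (auto simp: pderiv_game_def dominating_eq_forces)

lemma pderiv_dominating_not_dep:
  assumes "x \<notin> dep f"
  shows "pderiv_game x (dominating f) S = 0"
  by (simp add: pderiv_dominating forces_insert_iff[OF assms] forces_Diff_iff[OF assms])

lemma pderiv_dominating_literal: "pderiv_game x (dominating (\<lambda>u. u x = b)) S = 1"
  by (simp add: pderiv_dominating forces_literal)

lemma pderiv_dominating_ite:
  fixes g A B :: "('x::finite) bfun"
  assumes "dep g \<inter> dep A = {}" and "dep g \<inter> dep B = {}" and "B \<le> A" and x: "x \<in> dep g"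
  shows "pderiv_game x (dominating (\<lambda>u. g u \<and> A u \<or> \<not> g u \<and> B u)) S =
    pderiv_game x (dominating g) S * of_bool (forces A S \<and> \<not> forces B S)"
proof -
  have "x \<notin> dep A" "x \<notin> dep B"
    using assms by blast+
  moreover have "forces g (S - {x}) \<Longrightarrow> forces g (insert x S)"
    by (erule forces_mono[rotated]) blast
  moreover have "forces B S \<Longrightarrow> forces A S"
    by (rule forces_mono_fun[OF \<open>B \<le> A\<close>])
  ultimately show ?thesis
    unfolding pderiv_dominating forces_ite[OF assms(1-3)]
    by (auto simp: forces_insert_iff forces_Diff_iff)
qed

lemma nonconstantE:
  assumes "nonconstant g"
  obtains v where "g v = c"
proof -
  obtain a b where "g a \<noteq> g b"
    using assms by (auto simp: nonconstant_def)
  then show ?thesis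
    using that by (cases c; cases "g a") auto
qed

lemma cof_eq_subst_override_on:
  fixes l g :: "('x::finite) bfun"
  assumes disj: "dep l \<inter> dep g = {}" and "g v = c"
  shows "cof l z c u = subst l z g (override_on u v (dep g))"
proof -
  let ?u = "override_on u v (dep g)"
  have "g ?u = c"
    using dep_cong[of g ?u v] \<open>g v = c\<close> by simp
  then have "subst l z g ?u = cof l z c ?u"
    by (cases c) (simp_all add: subst_def)
  also have "cof l z c ?u = cof l z c u"
    unfolding cof_def by (rule dep_cong[of l]) (use disj in \<open>auto simp: override_on_def\<close>)
  finally show ?thesis
    by simp
qed

lemma mod_cof_eq_override_on:
  fixes f g :: "('x::finite) bfun"
  assumes "modular f g" and "g v = c"
  shows "mod_cof f g c = (\<lambda>u. f (override_on u v (dep g)))"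
proof -
  have cof_eq: "cof l z c = (\<lambda>u. f (override_on u v (dep g)))"
    if "dep l \<inter> dep g = {}" and "f = subst l z g" for l z
    using cof_eq_subst_override_on[OF that(1) assms(2)] that(2) by blast
  obtain l z where "dep l \<inter> dep g = {}" and "f = subst l z g"
    using assms(1) by (auto simp: modular_def)
  then show ?thesis
    unfolding mod_cof_def
  proof (intro some_equality)
    fix h
    assume "\<exists>l z. dep l \<inter> dep g = {} \<and> f = subst l z g \<and> h = cof l z c"
    then show "h = (\<lambda>u. f (override_on u v (dep g)))"
      using cof_eq by blast
  qed (use cof_eq in metis)
qed

lemma mod_cof_eq_cof:
  fixes f g :: "('x::finite) bfun"
  assumes "modular f g" and "dep l \<inter> dep g = {}" and "f = subst l z g"
  shows "mod_cof f g c = cof l z c"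
proof -
  obtain v where v: "g v = c"
    using assms(1) nonconstantE by (auto simp: modular_def)
  have "mod_cof f g c = (\<lambda>u. f (override_on u v (dep g)))"
    by (rule mod_cof_eq_override_on[OF assms(1) v])
  also have "\<dots> = cof l z c"
    using cof_eq_subst_override_on[OF assms(2) v] assms(3) by (simp add: fun_eq_iff)
  finally show ?thesis .
qed

lemma modular_eq_ite_mod_cof:
  fixes f g :: "('x::finite) bfun"
  assumes "modular f g"
  shows "f = (\<lambda>u. g u \<and> mod_cof f g True u \<or> \<not> g u \<and> mod_cof f g False u)"
proof
  fix u :: "'x \<Rightarrow> bool"
  have "override_on u u (dep g) = u"
    by (simp add: override_on_def)
  then have "mod_cof f g (g u) u = f u"
    by (simp add: mod_cof_eq_override_on[OF assms refl])
  then show "f u = (g u \<and> mod_cof f g True u \<or> \<not> g u \<and> mod_cof f g False u)"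
    by (cases "g u") simp_all
qed

lemma dep_mod_cof_subset:
  fixes f g :: "('x::finite) bfun"
  assumes "modular f g"
  shows "dep (mod_cof f g c) \<subseteq> dep f - dep g"
proof -
  obtain v where "g v = c"
    using assms nonconstantE by (auto simp: modular_def)
  then show ?thesis
    by (simp add: mod_cof_eq_override_on[OF assms] dep_override_on_subset)
qed

lemma mono_modular_imp_modular: "mono_modular f g \<Longrightarrow> modular f g"
  by (auto simp: mono_modular_def modular_def)

lemma mono_modular_mod_cof_le:
  fixes f g :: "('x::finite) bfun"
  assumes "mono_modular f g"
  shows "mod_cof f g False \<le> mod_cof f g True"
proof -
  obtain l z where "dep l \<inter> dep g = {}" "monotone_in l z" "f = subst l z g"
    using assms by (auto simp: mono_modular_def)
  then show ?thesis
    using mod_cof_eq_cof[OF mono_modular_imp_modular[OF assms]] by (simp add: monotone_in_def)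
qed

lemma pderiv_dominating_mono_modular:
  fixes f g :: "('x::finite) bfun"
  assumes "mono_modular f g" and "x \<in> dep g"
  shows "pderiv_game x (dominating f) S = pderiv_game x (dominating g) S *
    of_bool (forces (mod_cof f g True) S \<and> \<not> forces (mod_cof f g False) S)"
proof -
  have "modular f g"
    using assms(1) by (rule mono_modular_imp_modular)
  then have "pderiv_game x (dominating f) S = pderiv_game x (dominating
      (\<lambda>u. g u \<and> mod_cof f g True u \<or> \<not> g u \<and> mod_cof f g False u)) S"
    by (rule arg_cong[where f = "\<lambda>h. pderiv_game x (dominating h) S", OF modular_eq_ite_mod_cof])
  also have "\<dots> = pderiv_game x (dominating g) S *
      of_bool (forces (mod_cof f g True) S \<and> \<not> forces (mod_cof f g False) S)"
    using dep_mod_cof_subset[OF \<open>modular f g\<close>] mono_modular_mod_cof_le[OF assms(1)] assms(2)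
    by (intro pderiv_dominating_ite) auto
  finally show ?thesis .
qed

lemma pderiv_dominating_mod_subst:
  fixes f g :: "('x::finite) bfun"
  assumes "mono_modular f g" and "x\<^sub>g \<notin> dep f"
  shows "pderiv_game x\<^sub>g (dominating (mod_subst f g x\<^sub>g)) S =
    of_bool (forces (mod_cof f g True) S \<and> \<not> forces (mod_cof f g False) S)"
proof -
  have "mod_subst f g x\<^sub>g = (\<lambda>u. bvar x\<^sub>g u \<and> mod_cof f g True u \<or> \<not> bvar x\<^sub>g u \<and> mod_cof f g False u)"
    by (simp add: mod_subst_def bvar_def)
  moreover have "dep (bvar x\<^sub>g) \<inter> dep (mod_cof f g c) = {}" for c
    using dep_mod_cof_subset[OF mono_modular_imp_modular[OF assms(1)], of c] assms(2)
    by (auto simp: dep_bvar)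
  moreover have "pderiv_game x\<^sub>g (dominating (bvar x\<^sub>g)) S = 1"
    using pderiv_dominating_literal[of x\<^sub>g True] by (simp add: bvar_def)
  ultimately show ?thesis
    using mono_modular_mod_cof_le[OF assms(1)] by (simp add: pderiv_dominating_ite dep_bvar)
qed

lemma pderiv_dominating_mod_cof_mono:
  fixes f g h :: "('x::finite) bfun"
  assumes "mono_modular f g" and "mono_modular h g"
    and "mod_cof h g True \<le> mod_cof f g True" and "mod_cof f g False \<le> mod_cof h g False"
    and "x \<in> dep g"
  shows "pderiv_game x (dominating h) S \<le> pderiv_game x (dominating f) S"
  unfolding pderiv_dominating_mono_modular[OF assms(1,5)] pderiv_dominating_mono_modular[OF assms(2,5)]
  using forces_mono_fun[OF assms(3)] forces_mono_fun[OF assms(4)]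
  by (intro mult_left_mono) (auto simp: pderiv_dominating)

lemma weakly_chain_rule_decomposable_dominating:
  "weakly_chain_rule_decomposable (dominating :: ('x::finite) cgm)"
  unfolding weakly_chain_rule_decomposable_def
  by (auto simp: fun_eq_iff pderiv_dominating_mono_modular pderiv_dominating_mod_subst)

lemma importance_inducing_dominating: "importance_inducing (dominating :: ('x::finite) cgm)"
  unfolding importance_inducing_def
proof (intro conjI allI impI)
  show "0 \<le> pderiv_game x (dominating f) S" "pderiv_game x (dominating f) S \<le> 1"
    for x and f :: "'x bfun" and S
    by (simp_all add: pderiv_dominating)
  show "pderiv_game x (dominating f) = (\<lambda>S. 0)" if "x \<notin> dep f" for x and f :: "'x bfun"
    using that by (simp add: fun_eq_iff pderiv_dominating_not_dep)
  show "pderiv_game x (dominating (bvar x)) = (\<lambda>S. 1)"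
    and "pderiv_game x (dominating (\<lambda>u. \<not> bvar x u)) = (\<lambda>S. 1)" for x :: 'x
    using pderiv_dominating_literal[of x True] pderiv_dominating_literal[of x False]
    by (simp_all add: fun_eq_iff bvar_def)
  show "dominating f S = dominating (perm_fun \<sigma> f) (\<sigma> ` S)" if "bij \<sigma>" for \<sigma> f S
    using that by (simp add: dominating_eq_forces forces_perm_fun)
  show "dominating f S = dominating (flipvar f y) S" for f y S
    by (simp add: dominating_eq_forces forces_flipvar)
  show "pderiv_game x (dominating h) \<le> pderiv_game x (dominating f)"
    if "mono_modular f g \<and> mono_modular h g \<and> mod_cof h g True \<le> mod_cof f g True
      \<and> mod_cof f g False \<le> mod_cof h g False \<and> x \<in> dep g" for f g h :: "'x bfun" and x
    using that by (auto intro: le_funI pderiv_dominating_mod_cof_mono)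
qed

theorem mainTheorem12:
  shows "weakly_chain_rule_decomposable (dominating :: ('x::finite) cgm)
       \<and> importance_inducing (dominating :: ('x::finite) cgm)"
  using weakly_chain_rule_decomposable_dominating importance_inducing_dominating by blast

end
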